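(* Let $K$ be a polyhedral cone and let $S$ be any slack matrix of $K$. Then $K$ is pointed if and only if $\dim(K)=\operatorname{rank}(S)$.
   Context: A matrix $S\in\mathbb{R}^{p\times q}$ is a slack matrix of a polyhedral cone $K\subseteq\mathbb{R}^n$ if there are $A\in\mathbb{R}^{p\times n}$, $B\in\mathbb{R}^{n\times q}$ with $K=\{x\in\mathbb{R}^n: x^TB\ge 0\}=\{y^TA: y\in\mathbb{R}_+^p\}$ and $S=AB$. A cone is pointed if its lineality space (the largest linear subspace it contains) is $\{0\}$. The dimension of a cone is the dimension of its linear span. *)

theory Defs
  imports "HOL-Analysis.Analysis"
begin

text \<open>Slack matrix: S = A B where K = {x. x^T B \<ge> 0} = {y^T A. y \<ge> 0}.
  Vectors are row vectors; x v* B is x^T B, y v* A is y^T A.\<close>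
definition is_slack_matrix :: "real^'q^'p \<Rightarrow> (real^'n) set \<Rightarrow> bool" where
  "is_slack_matrix S K \<longleftrightarrow>
     (\<exists>(A::real^'n^'p) (B::real^'q^'n).
        K = {x. \<forall>j. 0 \<le> (x v* B) $ j} \<and>
        K = {y v* A | y. \<forall>i. 0 \<le> y $ i} \<and>
        S = A ** B)"

definition polyhedral_cone :: "(real^'n) set \<Rightarrow> bool" where
  "polyhedral_cone K \<longleftrightarrow> polyhedron K \<and> cone K"

text \<open>Pointed: the lineality space (largest linear subspace contained in K) is {0},
  i.e. every linear subspace contained in K is {0}.\<close>
definition pointed :: "(real^'n) set \<Rightarrow> bool" where
  "pointed K \<longleftrightarrow> (\<forall>L. subspace L \<and> L \<subseteq> K \<longrightarrow> L = {0})"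

end

theory Submission
  imports Defs
begin

text \<open>Write \<open>K = {x. x B \<ge> 0} = {y A. y \<ge> 0}\<close> and \<open>f x = x B\<close>. A subspace inside \<open>K\<close>
  consists of vectors \<open>x\<close> with \<open>x B \<ge> 0\<close> and \<open>-x B \<ge> 0\<close>, so the lineality space of \<open>K\<close> is
  the kernel of \<open>f\<close>, and \<open>K\<close> is pointed iff \<open>f\<close> is injective. The rows of \<open>S = A B\<close> are the
  images under \<open>f\<close> of the rows of \<open>A\<close>, which span \<open>span K\<close>; hence \<open>rank S = dim (f (span K))\<close>.
  Since the kernel of \<open>f\<close> lies in \<open>K\<close>, injectivity of \<open>f\<close> is injectivity on \<open>span K\<close>, and a
  linear map preserves the dimension of a set exactly when it is injective on its span.\<close>

lemma linear_vector_matrix_mult: "linear (\<lambda>x. x v* (B::real^'m^'n))"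
  using matrix_vector_mul_linear[of "transpose B"] by simp

lemma vector_matrix_mult_eq_sum_rows:
  "(y::real^'p) v* (A::real^'n^'p) = (\<Sum>i\<in>UNIV. y $ i *\<^sub>R row i A)"
  by (simp add: vec_eq_iff vector_matrix_mult_def row_def sum_component mult.commute)

lemma axis_vector_matrix_mult: "axis i (1::real) v* A = row i A"
  by (simp add: vec_eq_iff vector_matrix_mult_def row_def axis_def mult_if_delta)

lemma rows_matrix_matrix_mult:
  "rows ((A::real^'n^'p) ** (B::real^'q^'n)) = (\<lambda>x. x v* B) ` rows A"
proof -
  have "row i (A ** B) = row i A v* B" for i
    by (simp add: vec_eq_iff vector_matrix_mult_def row_def matrix_matrix_mult_def mult.commute)
  then show ?thesis by (auto simp: rows_def)
qed

lemma span_nonneg_combinations_rows: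
  "span {y v* A | y. \<forall>i. 0 \<le> y $ i} = span (rows (A::real^'n^'p))"
proof -
  have "y v* A \<in> span (rows A)" for y
    unfolding vector_matrix_mult_eq_sum_rows
    by (intro span_sum span_scale span_base) (auto simp: rows_def)
  then have "{y v* A | y. \<forall>i. 0 \<le> y $ i} \<subseteq> span (rows A)"
    by blast
  moreover have "row i A \<in> {y v* A | y. \<forall>i. 0 \<le> y $ i}" for i
  proof -
    have "\<forall>k. 0 \<le> axis i (1::real) $ k"
      by (simp add: axis_def)
    then show ?thesis
      using axis_vector_matrix_mult[of i A] by (intro CollectI exI[of _ "axis i 1"]) simp
  qed
  then have "rows A \<subseteq> span {y v* A | y. \<forall>i. 0 \<le> y $ i}"
    by (auto simp: rows_def intro: span_base)
  ultimately show ?thesis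
    unfolding span_eq ..
qed

lemma dim_image_less:
  fixes f :: "'a::euclidean_space \<Rightarrow> 'b::euclidean_space"
  assumes "linear f" and "v \<in> span S" "v \<noteq> 0" "f v = 0"
  shows "dim (f ` S) < dim S"
proof -
  obtain B where "{v} \<subseteq> B" "B \<subseteq> span S" "independent B" "span S \<subseteq> span B"
    using maximal_independent_subset_extend[of "{v}" "span S"] assms(2,3) by auto
  then have "finite B" "v \<in> B"
    by (auto simp: independent_imp_finite)
  have span_B: "span B = span S"
    using \<open>B \<subseteq> span S\<close> \<open>span S \<subseteq> span B\<close> span_superset[of S]
    by (auto simp: span_eq)
  have card_B: "card B = dim S"
    using \<open>independent B\<close> span_B by (metis dim_eq_card_independent dim_span)
  have "f ` S \<subseteq> span (f ` B)"
    using span_superset[of S] span_B linear_span_image[OF assms(1)] by blast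
  also have "span (f ` B) = span (f ` (B - {v}))"
    using \<open>v \<in> B\<close> assms(4) by (metis image_insert insert_Diff span_insert_0)
  finally have "dim (f ` S) \<le> card (f ` (B - {v}))"
    using \<open>finite B\<close> by (intro dim_le_card) auto
  also have "\<dots> \<le> card (B - {v})"
    by (rule card_image_le) (use \<open>finite B\<close> in simp)
  also have "\<dots> < card B"
    using \<open>finite B\<close> \<open>v \<in> B\<close> by (rule card_Diff1_less)
  finally show ?thesis
    using card_B by simp
qed

lemma dim_image_eq_iff_inj_on_span:
  fixes f :: "'a::euclidean_space \<Rightarrow> 'b::euclidean_space"
  assumes "linear f"
  shows "dim (f ` S) = dim S \<longleftrightarrow> inj_on f (span S)"
proof
  assume "dim (f ` S) = dim S"
  then show "inj_on f (span S)"
    unfolding linear_inj_on_iff_eq_0[OF assms subspace_span]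
    using dim_image_less[OF assms] by fastforce
qed (rule dim_image_eq[OF assms])

lemma pointed_nonneg_cone_iff:
  "pointed {x. \<forall>j. 0 \<le> (x v* B) $ j} \<longleftrightarrow> (\<forall>x. x v* (B::real^'q^'n) = 0 \<longrightarrow> x = 0)"
proof
  assume "pointed {x. \<forall>j. 0 \<le> (x v* B) $ j}"
  moreover have "subspace {x. x v* B = 0}"
    using linear_vector_matrix_mult[of B] by (rule linear_subspace_kernel)
  ultimately have "{x. x v* B = 0} = {0}"
    unfolding pointed_def by auto
  then show "\<forall>x. x v* B = 0 \<longrightarrow> x = 0"
    by blast
next
  assume ker: "\<forall>x. x v* B = 0 \<longrightarrow> x = 0"
  show "pointed {x. \<forall>j. 0 \<le> (x v* B) $ j}"
    unfolding pointed_def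
  proof (intro allI impI)
    fix L assume L: "subspace L \<and> L \<subseteq> {x. \<forall>j. 0 \<le> (x v* B) $ j}"
    have "x = 0" if "x \<in> L" for x
    proof -
      have "-x \<in> L"
        using L that by (simp add: subspace_neg)
      then have "0 \<le> (x v* B) $ j" "0 \<le> ((-x) v* B) $ j" for j
        using L that by auto
      moreover have "(-x) v* B = - (x v* B)"
        using vector_matrix_mult_diff_distrib[of 0 x B] by simp
      ultimately have "x v* B = 0"
        by (simp add: vec_eq_iff order_antisym)
      then show "x = 0"
        using ker by blast
    qed
    then show "L = {0}"
      using L subspace_0 by blast
  qed
qed

theorem lemma2p13:
  fixes K :: "(real^'n) set" and S :: "real^'q^'p"
  assumes "polyhedral_cone K"
    and "is_slack_matrix S K"
  shows "pointed K \<longleftrightarrow> dim (span K) = rank S"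
proof -
  obtain A :: "real^'n^'p" and B :: "real^'q^'n" where
    K_ineq: "K = {x. \<forall>j. 0 \<le> (x v* B) $ j}" and
    K_gen: "K = {y v* A | y. \<forall>i. 0 \<le> y $ i}" and "S = A ** B"
    using assms(2) unfolding is_slack_matrix_def by blast
  let ?f = "\<lambda>x. x v* B"
  have span_K: "span K = span (rows A)"
    using K_gen span_nonneg_combinations_rows by simp
  have kernel_in_span: "x \<in> span (rows A)" if "?f x = 0" for x
    using that K_ineq span_K span_superset[of K] by auto
  have "pointed K \<longleftrightarrow> (\<forall>x. ?f x = 0 \<longrightarrow> x = 0)"
    by (simp add: K_ineq pointed_nonneg_cone_iff)
  also have "\<dots> \<longleftrightarrow> (\<forall>x\<in>span (rows A). ?f x = 0 \<longrightarrow> x = 0)"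
    using kernel_in_span by blast
  also have "\<dots> \<longleftrightarrow> inj_on ?f (span (rows A))"
    by (rule linear_inj_on_iff_eq_0[OF linear_vector_matrix_mult subspace_span, symmetric])
  also have "\<dots> \<longleftrightarrow> dim (?f ` rows A) = dim (rows A)"
    by (rule dim_image_eq_iff_inj_on_span[OF linear_vector_matrix_mult, symmetric])
  also have "\<dots> \<longleftrightarrow> dim (span K) = rank S"
    by (auto simp: \<open>S = A ** B\<close> row_rank_def rows_matrix_matrix_mult span_K)
  finally show ?thesis .
qed

end
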